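(* For all integers $m\ge0$ and $n\ge0$, $$v_m^{(n)}(Y)=\frac{(-1)^m}{m!}\,U(Y)^{bm-m-n+1}\,w_{m+n,bm}(Y).$$
   Context: Let $a,b\ge2$ be integers, $R$ a $\mathbb{Q}$-algebra, $u_0,\ldots,u_a\in R$, and $U(Y)=\sum_{j=0}^au_jY^j\in R[Y]$. Let $I(Y,Z)\in R[[Z]][Y]$ be the formal inverse of $Y+ZU(Y)^b$, i.e. the unique element with $I(Y+ZU(Y)^b,Z)=Y$, and define $v_k(Y)\in R[Y]$ by $U(I(Y,Z))=\sum_{k\ge0}v_k(Y)Z^k$. For each integer $\lambda\ge0$ define $w_{n,\lambda}(Y)\in R[Y]$ recursively by $w_{0,\lambda}(Y)=1/(\lambda+1)$ and $w_{n,\lambda}(Y)=(\lambda-n+2)U'(Y)w_{n-1,\lambda}(Y)+U(Y)w_{n-1,\lambda}'(Y)$ for $n\ge1$. The superscript $(n)$ denotes the $n$-th derivative in $Y$. (When the exponent $bm-m-n+1$ is negative, the right-hand side involves negative powers of $U(Y)$, i.e. it is a formal expression in which $U(Y)$ is inverted.) *)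

theory Defs
  imports "HOL-Computational_Algebra.Polynomial" "HOL-Computational_Algebra.Formal_Power_Series"
begin

definition qinv :: "nat \<Rightarrow> 'a::comm_ring_1" where
  "qinv k = (THE x. of_nat k * x = 1)"

definition lift_poly :: "'a::comm_ring_1 poly \<Rightarrow> 'a poly fps poly" where
  "lift_poly p = map_poly (\<lambda>c. fps_const [:c:]) p"

definition fps_Y :: "'a::comm_ring_1 poly fps" where
  "fps_Y = fps_const [:0, 1:]"

text \<open>For c in R[Y] and V in R[Y], the element c(Y + Z V(Y)) of R[Y][[Z]].\<close>
definition shiftY :: "'a::comm_ring_1 poly \<Rightarrow> 'a poly \<Rightarrow> 'a poly fps" where
  "shiftY V c = poly (lift_poly c) (fps_Y + fps_X * fps_const V)"

text \<open>For F(Y,Z) = sum_k F_k(Y) Z^k in R[Y][[Z]], the substitution F(Y + Z V(Y), Z)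
  = sum_k F_k(Y + Z V(Y)) Z^k.\<close>
definition substY :: "'a::comm_ring_1 poly \<Rightarrow> 'a poly fps \<Rightarrow> 'a poly fps" where
  "substY V F = Abs_fps (\<lambda>n. \<Sum>k\<le>n. fps_nth (shiftY V (fps_nth F k)) (n - k))"

text \<open>The formal inverse I(Y,Z) of Y + Z U(Y)^b: the unique I with I(Y + Z U(Y)^b, Z) = Y.\<close>
definition formal_inverse :: "'a::comm_ring_1 poly \<Rightarrow> nat \<Rightarrow> 'a poly fps" where
  "formal_inverse U b = (THE I. substY (U ^ b) I = fps_Y)"

definition vcoeff :: "'a::comm_ring_1 poly \<Rightarrow> nat \<Rightarrow> nat \<Rightarrow> 'a poly" where
  "vcoeff U b k = fps_nth (poly (lift_poly U) (formal_inverse U b)) k"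

text \<open>Formal derivative d/dY on R[Y] for an arbitrary commutative ring
  (the library's derivative requires no zero divisors).\<close>
definition dY :: "'a::comm_ring_1 poly \<Rightarrow> 'a poly" where
  "dY p = (\<Sum>i\<le>degree p. monom (of_nat i * coeff p i) (i - 1))"

text \<open>w_{n,lambda}(Y).  Note: w_{n+1} uses the factor lambda - (n+1) + 2 = lambda - n + 1.\<close>
fun wpoly :: "'a::comm_ring_1 poly \<Rightarrow> nat \<Rightarrow> nat \<Rightarrow> 'a poly" where
  "wpoly U 0 l = [: qinv (l + 1) :]"
| "wpoly U (Suc n) l =
     [: of_int (int l - int n + 1) :] * dY U * wpoly U n l + U * dY (wpoly U n l)"

end

theory Submission
  imports Defs
begin

text \<open>
  By Taylor's formula, c(Y + Z W) = sum_j W^j c^(j) / j! Z^j, so the substitution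
  Y := Y + Z W(Y) is a ring endomorphism of R[Y][[Z]]; it is injective because it is
  unitriangular on coefficients. Lagrange inversion takes the form: the series S with
  S_0 = G and S_m = (-1)^m / m! D^(m-1) (W^m G') satisfies S(Y + Z W, Z) = G. Indeed,
  the Z^n coefficient of S(Y + Z W, Z) is the alternating sum
  sum_k (-1)^k / (k! (n-k)!) W^(n-k) D^(n-1) (W^k G'), and such sums vanish whenever
  fewer than n derivatives are taken: differentiating the sum for n + 1 gives the sum
  with one more derivative plus W' times the sum for n.

  With W = U^b, injectivity identifies I with S for G = Y and U(I) with S for G = U, so
  v_m = (-1)^m / m! D^m (U^(bm+1)) / (bm+1). The recursion defining w_{N,lambda} is what
  differentiating U^(lambda+1-N) w_{N,lambda} produces; beyond N = lambda + 1 the same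
  computation gives U^(N-lambda-1) D^N (U^(lambda+1)) / (lambda+1) = w_{N,lambda} exactly,
  so no power of U has to be cleared.
\<close>

unbundle fps_syntax

section \<open>Formal derivative\<close>

lemma coeff_dY: "coeff (dY p) n = of_nat (Suc n) * coeff p (Suc n)"
proof -
  have "coeff (dY p) n = (\<Sum>i\<le>degree p. if i = Suc n then of_nat i * coeff p i else 0)"
    unfolding dY_def coeff_sum coeff_monom by (intro sum.cong refl) (auto split: nat_diff_split_asm)
  also have "\<dots> = of_nat (Suc n) * coeff p (Suc n)"
    by (simp add: coeff_eq_0)
  finally show ?thesis .
qed

lemma dY_add: "dY (p + q) = dY p + dY q"
  by (rule poly_eqI) (simp add: coeff_dY algebra_simps)

lemma dY_smult: "dY (smult a p) = smult a (dY p)"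
  by (rule poly_eqI) (simp add: coeff_dY algebra_simps)

lemma dY_sum: "dY (\<Sum>i\<in>A. f i) = (\<Sum>i\<in>A. dY (f i))"
  by (rule poly_eqI) (simp add: coeff_dY coeff_sum sum_distrib_left)

lemma dY_const [simp]: "dY [:a:] = 0"
  by (rule poly_eqI) (simp add: coeff_dY)

lemma dY_0 [simp]: "dY 0 = 0"
  using dY_const[of 0] by simp

lemma dY_1 [simp]: "dY 1 = 0"
  using dY_const[of 1] by (simp add: one_pCons)

lemma dY_pCons: "dY (pCons a p) = p + pCons 0 (dY p)"
  by (rule poly_eqI) (simp add: coeff_dY coeff_pCons algebra_simps split: nat.split)

lemma dY_mult: "dY (p * q) = p * dY q + q * dY p"
  by (induct p) (auto simp: dY_add dY_smult dY_pCons algebra_simps)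

lemma dY_power_Suc: "dY (p ^ Suc n) = smult (of_nat (Suc n)) (p ^ n * dY p)"
proof (induction n)
  case (Suc n)
  have "dY (p ^ Suc (Suc n)) = p * dY (p ^ Suc n) + p ^ Suc n * dY p"
    by (metis dY_mult power_Suc)
  then show ?case
    unfolding Suc.IH of_nat_Suc[of "Suc n"] smult_add_left by (simp add: algebra_simps del: of_nat_Suc)
qed simp

lemma mult_dY_power: "p * dY (p ^ n) = smult (of_nat n) (p ^ n * dY p)"
proof (cases n)
  case (Suc k)
  show ?thesis
    unfolding Suc dY_power_Suc by (simp add: mult_smult_right mult.assoc)
qed simp

lemma dY_funpow_0 [simp]: "(dY ^^ n) 0 = 0"
  by (induct n) simp_all

lemma dY_funpow_smult: "(dY ^^ n) (smult a p) = smult a ((dY ^^ n) p)"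
  by (induct n) (simp_all add: dY_smult)

lemma dY_funpow_pCons:
  "(dY ^^ Suc n) (pCons a p) = smult (of_nat (Suc n)) ((dY ^^ n) p) + pCons 0 ((dY ^^ Suc n) p)"
proof (induction n)
  case 0
  then show ?case by (simp add: dY_pCons)
next
  case (Suc n)
  have "(dY ^^ Suc (Suc n)) (pCons a p) = dY ((dY ^^ Suc n) (pCons a p))"
    by simp
  also have "\<dots> = smult (of_nat (Suc n)) ((dY ^^ Suc n) p) + ((dY ^^ Suc n) p + pCons 0 ((dY ^^ Suc (Suc n)) p))"
    unfolding Suc.IH by (simp add: dY_add dY_smult dY_pCons)
  finally show ?case
    unfolding of_nat_Suc[of "Suc n"] smult_add_left by (simp add: algebra_simps del: of_nat_Suc)
qed

section \<open>Substitution Y := Y + Z W(Y)\<close>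

lemma lift_poly_0 [simp]: "lift_poly 0 = 0"
  by (simp add: lift_poly_def)

lemma lift_poly_pCons: "lift_poly (pCons a p) = pCons (fps_const [:a:]) (lift_poly p)"
  unfolding lift_poly_def by (rule map_poly_pCons) simp

lemma lift_poly_add: "lift_poly (p + q) = lift_poly p + lift_poly q"
  unfolding lift_poly_def by (rule poly_eqI) (simp add: coeff_map_poly)

lemma lift_poly_smult: "lift_poly (smult a p) = smult (fps_const [:a:]) (lift_poly p)"
  unfolding lift_poly_def by (rule map_poly_smult) (simp_all add: fps_const_mult mult.commute)

lemma lift_poly_mult: "lift_poly (p * q) = lift_poly p * lift_poly q"
  by (induct p) (simp_all add: lift_poly_add lift_poly_smult lift_poly_pCons)

lemma poly_lift_poly_pCons:
  "poly (lift_poly (pCons a p)) F = fps_const [:a:] + F * poly (lift_poly p) F"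
  by (simp add: lift_poly_pCons)

lemma poly_lift_poly_fps_Y: "poly (lift_poly p) fps_Y = fps_const p"
  by (induct p) (simp_all add: poly_lift_poly_pCons fps_Y_def)

lemma shiftY_add: "shiftY V (p + q) = shiftY V p + shiftY V q"
  by (simp add: shiftY_def lift_poly_add)

lemma shiftY_mult: "shiftY V (p * q) = shiftY V p * shiftY V q"
  by (simp add: shiftY_def lift_poly_mult)

lemma shiftY_const: "shiftY V [:a:] = fps_const [:a:]"
  by (simp add: shiftY_def lift_poly_pCons)

lemma shiftY_pCons:
  "shiftY V (pCons a p)
     = fps_const [:a:] + (fps_const [:0, 1:] * shiftY V p + fps_X * (fps_const V * shiftY V p))"
  by (simp add: shiftY_def lift_poly_pCons fps_Y_def algebra_simps)

lemma shiftY_0 [simp]: "shiftY V 0 = 0"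
  by (simp add: shiftY_def)

lemma shiftY_nth_0 [simp]: "shiftY V p $ 0 = p"
  by (induct p) (simp_all add: shiftY_pCons)

lemma substY_nth: "substY V F $ n = (\<Sum>k\<le>n. shiftY V (F $ k) $ (n - k))"
  by (simp add: substY_def)

lemma substY_nth_eq_nth_plus_lower: "substY V F $ n = F $ n + (\<Sum>k<n. shiftY V (F $ k) $ (n - k))"
  by (simp add: substY_nth flip: lessThan_Suc_atMost)

lemma substY_inj:
  assumes "substY V F = substY V G"
  shows "F = G"
proof (rule fps_ext)
  fix n
  show "F $ n = G $ n"
  proof (induction n rule: less_induct)
    case (less n)
    then have "(\<Sum>k<n. shiftY V (F $ k) $ (n - k)) = (\<Sum>k<n. shiftY V (G $ k) $ (n - k))"
      by simp
    with assms show ?case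
      using substY_nth_eq_nth_plus_lower[of V F n] substY_nth_eq_nth_plus_lower[of V G n] by simp
  qed
qed

lemma substY_add: "substY V (F + G) = substY V F + substY V G"
  by (rule fps_ext) (simp add: substY_nth shiftY_add sum.distrib)

lemma substY_fps_const: "substY V (fps_const p) = shiftY V p"
proof (rule fps_ext)
  fix n
  have "substY V (fps_const p) $ n = (\<Sum>k\<le>n. if k = 0 then shiftY V p $ n else 0)"
    unfolding substY_nth by (intro sum.cong) auto
  then show "substY V (fps_const p) $ n = shiftY V p $ n"
    by simp
qed

lemma substY_0 [simp]: "substY V 0 = 0"
  using substY_fps_const[of V 0] by simp

lemma substY_fps_X_mult: "substY V (fps_X * F) = fps_X * substY V F"
proof (rule fps_ext)
  fix n
  show "substY V (fps_X * F) $ n = (fps_X * substY V F) $ n"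
  proof (cases n)
    case (Suc m)
    show ?thesis
      unfolding Suc substY_nth sum.atMost_Suc_shift by (simp add: substY_nth)
  qed (simp add: substY_nth)
qed

lemma fps_eq_const_plus_X_mult_shift:
  "(F :: 'a::comm_ring_1 fps) = fps_const (F $ 0) + fps_X * fps_shift 1 F"
  by (rule fps_ext) simp

lemma substY_eq_shiftY_plus_X_mult:
  "substY V F = shiftY V (F $ 0) + fps_X * substY V (fps_shift 1 F)"
  by (subst fps_eq_const_plus_X_mult_shift) (simp add: substY_add substY_fps_X_mult substY_fps_const)

lemma substY_const_mult: "substY V (fps_const p * G) = shiftY V p * substY V G"
proof (rule fps_ext)
  fix n
  show "substY V (fps_const p * G) $ n = (shiftY V p * substY V G) $ n"
  proof (induction n arbitrary: G)
    case 0
    show ?case by (simp add: substY_nth fps_mult_nth)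
  next
    case (Suc n)
    have "fps_shift 1 (fps_const p * G) = fps_const p * fps_shift 1 G"
      by (rule fps_ext) simp
    then have "substY V (fps_const p * G)
        = shiftY V (p * G $ 0) + fps_X * substY V (fps_const p * fps_shift 1 G)"
      by (subst substY_eq_shiftY_plus_X_mult) simp
    moreover have "shiftY V p * substY V G
        = shiftY V (p * G $ 0) + fps_X * (shiftY V p * substY V (fps_shift 1 G))"
      by (subst substY_eq_shiftY_plus_X_mult) (simp add: shiftY_mult algebra_simps)
    ultimately show ?case
      using Suc by simp
  qed
qed

lemma substY_mult: "substY V (F * G) = substY V F * substY V G"
proof (rule fps_ext)
  fix n
  show "substY V (F * G) $ n = (substY V F * substY V G) $ n"
  proof (induction n arbitrary: F)
    case 0
    show ?case by (simp add: substY_nth fps_mult_nth)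
  next
    case (Suc n)
    have "F * G = fps_const (F $ 0) * G + fps_X * (fps_shift 1 F * G)"
      by (subst fps_eq_const_plus_X_mult_shift) (simp add: algebra_simps)
    then have "substY V (F * G) = shiftY V (F $ 0) * substY V G + fps_X * substY V (fps_shift 1 F * G)"
      by (simp add: substY_add substY_fps_X_mult substY_const_mult)
    moreover have "substY V F * substY V G
        = shiftY V (F $ 0) * substY V G + fps_X * (substY V (fps_shift 1 F) * substY V G)"
      by (subst substY_eq_shiftY_plus_X_mult) (simp add: algebra_simps)
    ultimately show ?case
      using Suc by simp
  qed
qed

lemma substY_poly_lift_poly: "substY V (poly (lift_poly p) F) = poly (lift_poly p) (substY V F)"
  by (induct p) (simp_all add: poly_lift_poly_pCons substY_add substY_mult substY_fps_const shiftY_const)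

lemma qinv_eqI:
  assumes "of_nat k * x = (1 :: 'a::comm_ring_1)"
  shows "qinv k = x"
  unfolding qinv_def
proof (rule the_equality)
  fix y :: 'a
  assume "of_nat k * y = 1"
  then have "y = x * (of_nat k * y)"
    using assms by (metis mult.left_commute mult_1_right)
  then show "y = x"
    using \<open>of_nat k * y = 1\<close> by simp
qed (fact assms)

lemma qinv_1 [simp]: "qinv 1 = (1 :: 'a::comm_ring_1)" "qinv (Suc 0) = (1 :: 'a)"
  by (simp_all add: qinv_eqI)

context
  assumes nat_unit: "\<forall>k::nat. k > 0 \<longrightarrow> (of_nat k :: 'a::comm_ring_1) dvd 1"
begin

lemma of_nat_mult_qinv:
  assumes "k > 0"
  shows "of_nat k * (qinv k :: 'a) = 1"
proof -
  from nat_unit assms obtain x :: 'a where "1 = of_nat k * x"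
    by blast
  then show ?thesis
    using qinv_eqI by metis
qed

lemma of_nat_Suc_mult_qinv_fact_Suc: "of_nat (Suc n) * qinv (fact (Suc n)) = (qinv (fact n) :: 'a)"
proof -
  have "of_nat (fact n) * (of_nat (Suc n) * qinv (fact (Suc n)))
      = (of_nat (fact (Suc n)) * qinv (fact (Suc n)) :: 'a)"
    by (simp only: fact_Suc[where 'a=nat] of_nat_id of_nat_mult mult_ac)
  also have "\<dots> = 1"
    by (rule of_nat_mult_qinv) simp
  finally show ?thesis
    by (rule qinv_eqI[symmetric])
qed

lemma shiftY_nth: "shiftY V p $ j = smult (qinv (fact j)) (V ^ j * (dY ^^ j) p :: 'a poly)"
proof (induction p arbitrary: j)
  case (pCons a p)
  show ?case
  proof (cases j)
    case (Suc i)
    have "shiftY V (pCons a p) $ j = pCons 0 (shiftY V p $ Suc i) + V * shiftY V p $ i"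
      by (simp add: shiftY_pCons Suc)
    also have "\<dots> = pCons 0 (smult (qinv (fact (Suc i))) (V ^ Suc i * (dY ^^ Suc i) p))
        + smult (qinv (fact (Suc i)) * of_nat (Suc i)) (V ^ Suc i * (dY ^^ i) p)"
      using of_nat_Suc_mult_qinv_fact_Suc[of i]
      by (simp only: pCons.IH mult_smult_right smult_smult power_Suc mult_ac)
    also have "\<dots> = smult (qinv (fact (Suc i))) (V ^ Suc i * (dY ^^ Suc i) (pCons a p))"
      by (simp only: dY_funpow_pCons distrib_left smult_add_right mult_smult_right smult_smult
          mult_pCons_right smult_0_left add_0 smult_pCons mult_zero_right add.commute)
    finally show ?thesis
      using Suc by simp
  qed simp
qed simp

section \<open>Lagrange inversion\<close>

definition alt_binom :: "nat \<Rightarrow> nat \<Rightarrow> 'a::comm_ring_1" where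
  "alt_binom n k = (-1) ^ k * qinv (fact k) * qinv (fact (n - k))"

definition alt_binom_sum :: "'a::comm_ring_1 poly \<Rightarrow> nat \<Rightarrow> nat \<Rightarrow> 'a poly \<Rightarrow> 'a poly" where
  "alt_binom_sum W n j H = (\<Sum>k\<le>n. smult (alt_binom n k) (W ^ (n - k) * (dY ^^ j) (W ^ k * H)))"

definition lagrange_series :: "'a::comm_ring_1 poly \<Rightarrow> 'a poly \<Rightarrow> 'a poly fps" where
  "lagrange_series W G = Abs_fps (\<lambda>m. if m = 0 then G
     else smult ((-1) ^ m * qinv (fact m)) ((dY ^^ (m - 1)) (W ^ m * dY G)))"

lemma of_nat_fact_mult_alt_binom:
  assumes "k \<le> n"
  shows "of_nat (fact n) * (alt_binom n k :: 'a) = (-1) ^ k * of_nat (n choose k)"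
proof -
  have "of_nat (fact n) * (alt_binom n k :: 'a) = (-1) ^ k * of_nat (n choose k)
      * (of_nat (fact k) * qinv (fact k)) * (of_nat (fact (n - k)) * qinv (fact (n - k)))"
    unfolding alt_binom_def binomial_fact_lemma[OF assms, symmetric] by (simp only: of_nat_mult mult_ac)
  then show ?thesis
    by (simp add: of_nat_mult_qinv)
qed

lemma sum_alt_binom:
  assumes "n > 0"
  shows "(\<Sum>k\<le>n. alt_binom n k) = (0 :: 'a)"
proof -
  have "of_nat (fact n) * (\<Sum>k\<le>n. alt_binom n k)
      = (\<Sum>k\<le>n. of_nat (n choose k) * (-1) ^ k * 1 ^ (n - k) :: 'a)"
    unfolding sum_distrib_left by (intro sum.cong refl) (simp add: of_nat_fact_mult_alt_binom)
  also have "\<dots> = (-1 + 1) ^ n"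
    by (rule binomial_ring[symmetric])
  finally have "of_nat (fact n) * (\<Sum>k\<le>n. alt_binom n k) = (0 :: 'a)"
    using assms by (simp add: power_0_left)
  then have "qinv (fact n) * (of_nat (fact n) * (\<Sum>k\<le>n. alt_binom n k)) = (0 :: 'a)"
    by simp
  then show ?thesis
    by (simp add: mult.assoc[symmetric] mult.commute[of "qinv (fact n)"] of_nat_mult_qinv)
qed

lemma alt_binom_Suc_mult:
  assumes "k \<le> n"
  shows "alt_binom (Suc n) k * of_nat (Suc n - k) = (alt_binom n k :: 'a)"
proof -
  have "Suc n - k = Suc (n - k)"
    using assms by simp
  then show ?thesis
    unfolding alt_binom_def
    by (simp only: mult.assoc of_nat_Suc_mult_qinv_fact_Suc mult.commute[of "qinv (fact (Suc (n - k)))"])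
qed

lemma alt_binom_sum_0:
  assumes "n > 0"
  shows "alt_binom_sum W n 0 H = (0 :: 'a poly)"
proof -
  have "alt_binom_sum W n 0 H = smult (\<Sum>k\<le>n. alt_binom n k) (W ^ n * H)"
    unfolding alt_binom_sum_def smult_sum by (intro sum.cong refl) (simp flip: mult.assoc power_add)
  then show ?thesis
    using sum_alt_binom[OF assms] by simp
qed

lemma dY_alt_binom_sum:
  "dY (alt_binom_sum W (Suc n) j H)
     = alt_binom_sum W (Suc n) (Suc j) H + dY W * alt_binom_sum W n j (H :: 'a poly)"
proof -
  define B where "B k = (dY ^^ j) (W ^ k * H)" for k
  have "dY (smult (alt_binom (Suc n) k) (W ^ (Suc n - k) * B k))
      = smult (alt_binom (Suc n) k) (W ^ (Suc n - k) * dY (B k))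
        + (if k \<le> n then dY W * smult (alt_binom n k) (W ^ (n - k) * B k) else 0)"
    if "k \<le> Suc n" for k
  proof (cases "k \<le> n")
    case True
    define e where "e = n - k"
    have k: "Suc n - k = Suc e" and c: "alt_binom (Suc n) k * of_nat (Suc e) = (alt_binom n k :: 'a)"
      using alt_binom_Suc_mult[OF True] True by (simp_all add: e_def Suc_diff_le)
    have "dY (W ^ Suc e * B k) = W ^ Suc e * dY (B k) + smult (of_nat (Suc e)) (dY W * (W ^ e * B k))"
      by (simp only: dY_mult dY_power_Suc) (simp add: algebra_simps del: of_nat_Suc power_Suc)
    then show ?thesis
      using True by (simp add: k e_def[symmetric] dY_smult smult_add_right smult_smult mult.commute
          flip: c del: of_nat_Suc power_Suc)
  next
    case False
    with that have "k = Suc n"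
      by simp
    then show ?thesis
      by (simp add: dY_smult)
  qed
  then have "dY (alt_binom_sum W (Suc n) j H)
      = (\<Sum>k\<le>Suc n. smult (alt_binom (Suc n) k) (W ^ (Suc n - k) * dY (B k)))
        + (\<Sum>k\<le>Suc n. if k \<le> n then dY W * smult (alt_binom n k) (W ^ (n - k) * B k) else 0)"
    unfolding alt_binom_sum_def dY_sum B_def[symmetric] sum.distrib[symmetric]
    by (intro sum.cong refl) simp
  also have "\<dots> = alt_binom_sum W (Suc n) (Suc j) H + dY W * alt_binom_sum W n j H"
    by (simp add: alt_binom_sum_def B_def sum.atMost_Suc sum_distrib_left)
  finally show ?thesis .
qed

lemma alt_binom_sum_eq_0: "j < n \<Longrightarrow> alt_binom_sum W n j H = (0 :: 'a poly)"
proof (induction j arbitrary: n)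
  case 0
  then show ?case
    by (simp add: alt_binom_sum_0)
next
  case (Suc j)
  then obtain m where m: "n = Suc m" and "j < m"
    by (cases n) auto
  then have "alt_binom_sum W n (Suc j) H = dY (alt_binom_sum W n j H) - dY W * alt_binom_sum W m j H"
    by (simp add: dY_alt_binom_sum)
  then show ?case
    using Suc.IH \<open>j < m\<close> m by simp
qed

lemma dY_funpow_lagrange_series_nth:
  assumes "k \<le> Suc m"
  shows "(dY ^^ (Suc m - k)) (lagrange_series W G $ k)
           = smult ((-1) ^ k * qinv (fact k)) ((dY ^^ m) (W ^ k * dY G) :: 'a poly)"
proof (cases k)
  case 0
  then show ?thesis
    by (simp add: lagrange_series_def funpow_Suc_right del: funpow.simps)
next
  case (Suc j)
  with assms have "Suc m - k + j = m"
    by simp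
  then have iter: "(dY ^^ (Suc m - k)) ((dY ^^ j) p) = (dY ^^ m) p" for p :: "'a poly"
    by (metis comp_apply funpow_add)
  have "lagrange_series W G $ k = smult ((-1) ^ k * qinv (fact k)) ((dY ^^ j) (W ^ k * dY G))"
    by (simp add: lagrange_series_def Suc)
  then show ?thesis
    by (simp only: dY_funpow_smult iter)
qed

lemma substY_lagrange_series: "substY W (lagrange_series W G) = fps_const (G :: 'a poly)"
proof (rule fps_ext)
  fix n
  show "substY W (lagrange_series W G) $ n = fps_const G $ n"
  proof (cases n)
    case 0
    then show ?thesis
      by (simp add: substY_nth lagrange_series_def)
  next
    case (Suc m)
    have "substY W (lagrange_series W G) $ Suc m = alt_binom_sum W (Suc m) m (dY G)"
      unfolding substY_nth shiftY_nth alt_binom_sum_def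
      by (intro sum.cong refl)
        (simp add: dY_funpow_lagrange_series_nth alt_binom_def mult_smult_right smult_smult mult_ac)
    also have "\<dots> = 0"
      by (rule alt_binom_sum_eq_0) simp
    finally show ?thesis
      using Suc by simp
  qed
qed

section \<open>The coefficients v_m\<close>

lemma formal_inverse_eq_lagrange_series:
  "formal_inverse (U :: 'a poly) b = lagrange_series (U ^ b) [:0, 1:]"
  unfolding formal_inverse_def
proof (rule the_equality)
  show "substY (U ^ b) (lagrange_series (U ^ b) [:0, 1:]) = fps_Y"
    by (simp add: substY_lagrange_series fps_Y_def)
  then show "I = lagrange_series (U ^ b) [:0, 1:]" if "substY (U ^ b) I = fps_Y" for I
    using that by (metis substY_inj)
qed

lemma vcoeff_eq_lagrange_series_nth: "vcoeff (U :: 'a poly) b m = lagrange_series (U ^ b) U $ m"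
proof -
  have "substY (U ^ b) (poly (lift_poly U) (formal_inverse U b)) = fps_const U"
    by (simp add: substY_poly_lift_poly formal_inverse_eq_lagrange_series substY_lagrange_series
        poly_lift_poly_fps_Y flip: fps_Y_def)
  then have "poly (lift_poly U) (formal_inverse U b) = lagrange_series (U ^ b) U"
    by (metis substY_inj substY_lagrange_series)
  then show ?thesis
    by (simp add: vcoeff_def)
qed

lemma vcoeff_eq_dY_funpow_power:
  "vcoeff (U :: 'a poly) b m
     = smult ((-1) ^ m * qinv (fact m) * qinv (Suc (b * m))) ((dY ^^ m) (U ^ Suc (b * m)))"
proof (cases m)
  case 0
  then show ?thesis
    by (simp add: vcoeff_eq_lagrange_series_nth lagrange_series_def)
next
  case (Suc j)
  have "(U ^ b) ^ m * dY U = smult (qinv (Suc (b * m))) (dY (U ^ Suc (b * m)))"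
    unfolding dY_power_Suc smult_smult
    using of_nat_mult_qinv[of "Suc (b * m)"] by (simp add: power_mult mult.commute)
  then show ?thesis
    by (simp add: vcoeff_eq_lagrange_series_nth lagrange_series_def Suc dY_funpow_smult
        funpow_Suc_right smult_smult del: power_Suc funpow.simps)
qed

lemma dY_funpow_vcoeff:
  "(dY ^^ n) (vcoeff U b m) = [:(-1) ^ m * qinv (fact m):]
     * smult (qinv (Suc (b * m))) ((dY ^^ (m + n)) ((U :: 'a poly) ^ Suc (b * m)))"
proof -
  have "(dY ^^ n) ((dY ^^ m) p) = (dY ^^ (m + n)) p" for p :: "'a poly"
    by (metis add.commute comp_apply funpow_add)
  then show ?thesis
    by (simp add: vcoeff_eq_dY_funpow_power dY_funpow_smult smult_smult mult_ac)
qed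

lemma dY_funpow_power_eq_wpoly:
  assumes "N \<le> Suc l"
  shows "smult (qinv (Suc l)) ((dY ^^ N) (U ^ Suc l)) = U ^ (Suc l - N) * wpoly (U :: 'a poly) N l"
  using assms
proof (induction N)
  case 0
  then show ?case
    by (simp add: mult.commute)
next
  case (Suc N)
  define e where "e = l - N"
  define w where "w = wpoly U N l"
  have exps: "Suc l - N = Suc e" "Suc l - Suc N = e"
    using Suc.prems by (simp_all add: e_def)
  have c: "(of_int (int l - int N + 1) :: 'a) = of_nat (Suc e)"
    using Suc.prems by (simp add: e_def of_nat_diff)
  have "N \<le> Suc l"
    using Suc.prems by simp
  from Suc.IH[OF this] have "smult (qinv (Suc l)) ((dY ^^ N) (U ^ Suc l)) = U ^ Suc e * w"
    by (simp only: exps w_def)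
  then have "smult (qinv (Suc l)) ((dY ^^ Suc N) (U ^ Suc l)) = dY (U ^ Suc e * w)"
    by (simp only: funpow.simps comp_apply dY_smult[symmetric])
  also have "\<dots> = U ^ Suc e * dY w + w * smult (of_nat (Suc e)) (U ^ e * dY U)"
    by (simp only: dY_mult dY_power_Suc)
  also have "\<dots> = U ^ e * ([:of_nat (Suc e):] * dY U * w + U * dY w)"
    by (simp add: algebra_simps del: of_nat_Suc)
  also have "\<dots> = U ^ (Suc l - Suc N) * wpoly U (Suc N) l"
    by (simp only: exps wpoly.simps c w_def)
  finally show ?case .
qed

lemma power_mult_dY_funpow_power_eq_wpoly:
  assumes "Suc l \<le> N"
  shows "U ^ (N - Suc l) * smult (qinv (Suc l)) ((dY ^^ N) (U ^ Suc l)) = wpoly (U :: 'a poly) N l"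
  using assms
proof (induction N rule: dec_induct)
  case base
  then show ?case
    using dY_funpow_power_eq_wpoly[of "Suc l" l U] by simp
next
  case (step N)
  define e where "e = N - Suc l"
  define F where "F = smult (qinv (Suc l)) ((dY ^^ N) (U ^ Suc l))"
  have IH: "wpoly U N l = U ^ e * F"
    using step.IH by (simp add: e_def F_def)
  have c: "(of_int (int l - int N + 1) :: 'a) = - of_nat e"
    using step.hyps by (simp add: e_def of_nat_diff)
  have "wpoly U (Suc N) l = [:- of_nat e:] * dY U * (U ^ e * F) + U * dY (U ^ e * F)"
    by (simp only: wpoly.simps IH c)
  also have "U * dY (U ^ e * F) = U ^ Suc e * dY F + F * (U * dY (U ^ e))"
    by (simp add: dY_mult algebra_simps)
  also have "U * dY (U ^ e) = smult (of_nat e) (U ^ e * dY U)"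
    by (rule mult_dY_power)
  finally have "wpoly U (Suc N) l = U ^ Suc e * dY F"
    by (simp add: algebra_simps)
  moreover have "Suc N - Suc l = Suc e"
    using step.hyps by (simp add: e_def)
  ultimately show ?case
    by (simp add: F_def dY_smult)
qed

end

theorem mainTheorem8:
  fixes U :: "'a::comm_ring_1 poly" and a b m n :: nat
  assumes Qalg: "\<forall>k::nat. k > 0 \<longrightarrow> (of_nat k :: 'a) dvd 1"
    and a: "a \<ge> 2" and b: "b \<ge> 2" and degU: "degree U \<le> a"
  shows "(int (b * m) - int m - int n + 1 \<ge> 0 \<longrightarrow>
            (dY ^^ n) (vcoeff U b m)
              = [: (-1) ^ m * qinv (fact m) :] * U ^ nat (int (b * m) - int m - int n + 1)
                  * wpoly U (m + n) (b * m))
       \<and> (int (b * m) - int m - int n + 1 < 0 \<longrightarrow>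
            (\<exists>k. U ^ k * (U ^ nat (- (int (b * m) - int m - int n + 1)) * (dY ^^ n) (vcoeff U b m)
                      - [: (-1) ^ m * qinv (fact m) :] * wpoly U (m + n) (b * m)) = 0))"
proof -
  define l where "l = b * m"
  define c where "c = ((-1) ^ m * qinv (fact m) :: 'a)"
  have v: "(dY ^^ n) (vcoeff U b m) = [:c:] * smult (qinv (Suc l)) ((dY ^^ (m + n)) (U ^ Suc l))"
    unfolding c_def l_def by (rule dY_funpow_vcoeff[OF Qalg])
  have "(dY ^^ n) (vcoeff U b m) = [:c:] * U ^ (Suc l - (m + n)) * wpoly U (m + n) l"
    if "m + n \<le> Suc l"
    unfolding v dY_funpow_power_eq_wpoly[OF Qalg that] by (rule mult.assoc[symmetric])
  moreover have "U ^ (m + n - Suc l) * (dY ^^ n) (vcoeff U b m) = [:c:] * wpoly U (m + n) l"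
    if "Suc l \<le> m + n"
    unfolding v mult.left_commute[of "U ^ (m + n - Suc l)"] power_mult_dY_funpow_power_eq_wpoly[OF Qalg that] ..
  moreover have "nat (int (b * m) - int m - int n + 1) = Suc l - (m + n)"
    and "nat (- (int (b * m) - int m - int n + 1)) = m + n - Suc l"
    and "int (b * m) - int m - int n + 1 \<ge> 0 \<longleftrightarrow> m + n \<le> Suc l"
    unfolding l_def by linarith+
  ultimately show ?thesis
    unfolding c_def[symmetric] l_def[symmetric] by (auto intro: exI[of _ 0])
qed

end
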